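(* Let $f:\mathbb{R}^d\to\mathbb{R}$ be $L$-smooth ($L>0$) and bounded below. Suppose the set $f^\star(\epsilon)$ is bounded for some $\epsilon>0$. Then for every $\sigma$ with $0<\sigma<\sqrt{\frac{4\epsilon}{3Ld}}$, the function $f_\sigma$ attains its minimum on $\mathbb{R}^d$.
   Context: For $\epsilon\ge0$, $f^\star(\epsilon)=\{\mathbf{x}\in\mathbb{R}^d: f(\mathbf{x})-\inf_{\mathbb{R}^d}f\le\epsilon\}$. $f_\sigma(\mathbf{x})=\pi^{-d/2}\int_{\mathbb{R}^d} f(\mathbf{x}+\sigma\mathbf{u})\,e^{-\|\mathbf{u}\|_2^2}\,d\mathbf{u}$. $L$-smooth means differentiable with $L$-Lipschitz gradient. *)

theory Defs
  imports "HOL-Analysis.Analysis"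
begin

definition L_smooth :: "real \<Rightarrow> ('a::euclidean_space \<Rightarrow> real) \<Rightarrow> bool" where
  "L_smooth L f \<longleftrightarrow> (\<exists>g. (\<forall>x. (f has_derivative (\<lambda>h. g x \<bullet> h)) (at x)) \<and>
      (\<forall>x y. norm (g x - g y) \<le> L * norm (x - y)))"

definition sublevel_opt :: "('a \<Rightarrow> real) \<Rightarrow> real \<Rightarrow> 'a set" where
  "sublevel_opt f \<epsilon> = {x. f x - (INF y. f y) \<le> \<epsilon>}"

definition gauss_smooth :: "('a::euclidean_space \<Rightarrow> real) \<Rightarrow> real \<Rightarrow> 'a \<Rightarrow> real" where
  "gauss_smooth f \<sigma> x = pi powr (- real DIM('a) / 2) *
     (\<integral>u. f (x + \<sigma> *\<^sub>R u) * exp (- (norm u)\<^sup>2) \<partial>lborel)"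

end

theory Submission
  imports Defs "HOL-Probability.Probability"
begin

text \<open>An \<open>L\<close>-smooth \<open>f\<close> stays within \<open>L/2 \<parallel>y - x\<parallel>\<^sup>2\<close> of its tangent plane at \<open>x\<close>.
  Averaging this against the Gaussian, whose first moment vanishes and whose second moment is
  \<open>d/2\<close>, gives \<open>\<bar>f\<^sub>\<sigma> - f\<bar> \<le> L \<sigma>\<^sup>2 d / 4 < \<epsilon>/3\<close> uniformly. So \<open>f\<^sub>\<sigma>\<close> is smaller at a near-minimiser
  of \<open>f\<close> than anywhere outside the bounded set \<open>f\<^sup>\<star>(\<epsilon>)\<close>; being continuous, it attains its minimum
  on the compact closure of \<open>f\<^sup>\<star>(\<epsilon>)\<close>, and that minimum is global.\<close>

lemma has_bochner_integral_gaussian: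
  "has_bochner_integral lborel (\<lambda>t::real. exp (- t\<^sup>2)) (sqrt pi)"
  using has_bochner_integral_even_function[OF gaussian_moment_0] by simp

lemma has_bochner_integral_sq_gaussian:
  "has_bochner_integral lborel (\<lambda>t::real. t\<^sup>2 * exp (- t\<^sup>2)) (sqrt pi / 2)"
proof -
  have "has_bochner_integral lborel (\<lambda>t::real. exp (- t\<^sup>2) * t ^ (2 * 1))
      (2 *\<^sub>R ((sqrt pi / 2) * (fact (2 * 1) / (2 ^ (2 * 1) * fact 1))))"
    by (rule has_bochner_integral_even_function[OF gaussian_moment_even_pos]) simp
  then show ?thesis by (simp add: mult.commute fact_numeral)
qed

lemma norm_sq_eq_sum_Basis: "(norm x)\<^sup>2 = (\<Sum>b\<in>Basis. (x \<bullet> b)\<^sup>2)"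
  for x :: "'a::euclidean_space"
  unfolding power2_norm_eq_inner using euclidean_inner[of x x] by (simp add: power2_eq_square)

lemma nn_integral_gaussian_Basis_prod:
  fixes p :: "'a::euclidean_space \<Rightarrow> real \<Rightarrow> real"
  assumes [measurable]: "\<And>b. p b \<in> borel_measurable borel" and "\<And>b t. 0 \<le> p b t"
  shows "(\<integral>\<^sup>+u. ennreal ((\<Prod>b\<in>Basis. p b (u \<bullet> b)) * exp (- (norm u)\<^sup>2)) \<partial>lborel)
       = (\<Prod>b\<in>Basis. \<integral>\<^sup>+t. ennreal (p b t * exp (- t\<^sup>2)) \<partial>lborel)"
proof -
  have "(\<Prod>b\<in>Basis. p b (u \<bullet> b)) * exp (- (norm u)\<^sup>2) = (\<Prod>b\<in>Basis. p b (u \<bullet> b) * exp (- (u \<bullet> b)\<^sup>2))"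
    for u :: 'a
    by (simp add: norm_sq_eq_sum_Basis exp_sum[symmetric] sum_negf prod.distrib)
  then have "(\<integral>\<^sup>+u. ennreal ((\<Prod>b\<in>Basis. p b (u \<bullet> b)) * exp (- (norm u)\<^sup>2)) \<partial>lborel)
      = (\<integral>\<^sup>+u. (\<Prod>b\<in>Basis. ennreal (p b (u \<bullet> b) * exp (- (u \<bullet> b)\<^sup>2))) \<partial>lborel)"
    using assms(2) by (simp add: prod_ennreal)
  also have "\<dots> = (\<Prod>b\<in>Basis. \<integral>\<^sup>+t. ennreal (p b t * exp (- t\<^sup>2)) \<partial>lborel)"
    by (rule nn_integral_lborel_prod) auto
  finally show ?thesis .
qed

lemma has_bochner_integral_gaussian_euclidean:
  "has_bochner_integral lborel (\<lambda>u::'a::euclidean_space. exp (- (norm u)\<^sup>2)) (sqrt pi ^ DIM('a))"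
proof (rule has_bochner_integral_nn_integral)
  have "(\<integral>\<^sup>+t. ennreal (exp (- t\<^sup>2)) \<partial>lborel) = ennreal (sqrt pi)"
    using has_bochner_integral_gaussian
    by (subst nn_integral_eq_integral) (auto simp: has_bochner_integral_iff)
  then show "(\<integral>\<^sup>+u. ennreal (exp (- (norm u)\<^sup>2)) \<partial>(lborel::'a measure)) = ennreal (sqrt pi ^ DIM('a))"
    using nn_integral_gaussian_Basis_prod[of "\<lambda>(_::'a) _. 1"]
    by (simp add: ennreal_power)
qed auto

lemma has_bochner_integral_norm_sq_gaussian_euclidean:
  "has_bochner_integral lborel (\<lambda>u::'a::euclidean_space. (norm u)\<^sup>2 * exp (- (norm u)\<^sup>2))
     (real DIM('a) * sqrt pi ^ DIM('a) / 2)"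
proof (rule has_bochner_integral_nn_integral)
  have gauss: "(\<integral>\<^sup>+t. ennreal (exp (- t\<^sup>2)) \<partial>lborel) = ennreal (sqrt pi)"
    using has_bochner_integral_gaussian
    by (subst nn_integral_eq_integral) (auto simp: has_bochner_integral_iff)
  have sq: "(\<integral>\<^sup>+t. ennreal (t\<^sup>2 * exp (- t\<^sup>2)) \<partial>lborel) = ennreal (sqrt pi / 2)"
    using has_bochner_integral_sq_gaussian
    by (subst nn_integral_eq_integral) (auto simp: has_bochner_integral_iff)
  have coordinate: "(\<integral>\<^sup>+u. ennreal ((u \<bullet> b0)\<^sup>2 * exp (- (norm u)\<^sup>2)) \<partial>lborel)
      = ennreal (sqrt pi ^ DIM('a) / 2)" if b0: "b0 \<in> (Basis :: 'a set)" for b0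
  proof -
    let ?p = "\<lambda>b t. if b = b0 then t\<^sup>2 else 1"
    have "(\<integral>\<^sup>+u. ennreal ((u \<bullet> b0)\<^sup>2 * exp (- (norm u)\<^sup>2)) \<partial>lborel)
        = (\<integral>\<^sup>+u. ennreal ((\<Prod>b\<in>Basis. ?p b (u \<bullet> b)) * exp (- (norm u)\<^sup>2)) \<partial>lborel)"
      using b0 by simp
    also have "\<dots> = (\<Prod>b\<in>Basis. \<integral>\<^sup>+t. ennreal (?p b t * exp (- t\<^sup>2)) \<partial>lborel)"
      by (rule nn_integral_gaussian_Basis_prod) auto
    also have "\<dots> = (\<Prod>b\<in>Basis. if b = b0 then ennreal (sqrt pi / 2) else ennreal (sqrt pi))"
      by (rule prod.cong) (auto simp: gauss sq)
    also have "\<dots> = ennreal (sqrt pi / 2) * ennreal (sqrt pi) ^ (DIM('a) - 1)"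
      using b0 by (simp add: prod_gen_delta)
    also have "\<dots> = ennreal (sqrt pi ^ DIM('a) / 2)"
    proof -
      have "DIM('a) = Suc (DIM('a) - 1)" using DIM_positive[where 'a='a] by linarith
      then have "sqrt pi ^ DIM('a) = sqrt pi * sqrt pi ^ (DIM('a) - 1)" by (metis power_Suc)
      then show ?thesis by (simp add: ennreal_power ennreal_mult[symmetric])
    qed
    finally show ?thesis .
  qed
  have "(\<integral>\<^sup>+u. ennreal ((norm u)\<^sup>2 * exp (- (norm u)\<^sup>2)) \<partial>(lborel::'a measure))
      = (\<integral>\<^sup>+u. (\<Sum>b\<in>Basis. ennreal ((u \<bullet> b)\<^sup>2 * exp (- (norm u)\<^sup>2))) \<partial>(lborel::'a measure))"
    by (simp add: norm_sq_eq_sum_Basis sum_distrib_right sum_ennreal)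
  also have "\<dots> = (\<Sum>b\<in>Basis. \<integral>\<^sup>+u. ennreal ((u \<bullet> b)\<^sup>2 * exp (- (norm u)\<^sup>2)) \<partial>(lborel::'a measure))"
    by (rule nn_integral_sum) auto
  also have "\<dots> = ennreal (real DIM('a) * sqrt pi ^ DIM('a) / 2)"
    by (simp add: coordinate ennreal_of_nat_eq_real_of_nat ennreal_mult[symmetric])
  finally show "(\<integral>\<^sup>+u. ennreal ((norm u)\<^sup>2 * exp (- (norm u)\<^sup>2)) \<partial>(lborel::'a measure))
      = ennreal (real DIM('a) * sqrt pi ^ DIM('a) / 2)" .
qed auto

lemma integrable_gaussian_quadratic_bound:
  fixes h :: "'a::euclidean_space \<Rightarrow> real"
  assumes [measurable]: "h \<in> borel_measurable borel"
    and bound: "\<And>u. \<bar>h u\<bar> \<le> a + b * (norm u)\<^sup>2"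
  shows "integrable lborel (\<lambda>u. h u * exp (- (norm u)\<^sup>2))"
proof (rule Bochner_Integration.integrable_bound)
  show "integrable lborel (\<lambda>u::'a. a * exp (- (norm u)\<^sup>2) + b * ((norm u)\<^sup>2 * exp (- (norm u)\<^sup>2)))"
    using has_bochner_integral_gaussian_euclidean has_bochner_integral_norm_sq_gaussian_euclidean
    by (intro Bochner_Integration.integrable_add Bochner_Integration.integrable_mult_right)
       (auto simp: has_bochner_integral_iff)
  show "AE u in lborel. norm (h u * exp (- (norm u)\<^sup>2))
      \<le> norm (a * exp (- (norm u)\<^sup>2) + b * ((norm u)\<^sup>2 * exp (- (norm u)\<^sup>2)))"
  proof (rule AE_I2)
    fix u :: 'a
    have "\<bar>h u\<bar> * exp (- (norm u)\<^sup>2) \<le> (a + b * (norm u)\<^sup>2) * exp (- (norm u)\<^sup>2)"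
      using bound by (intro mult_right_mono) auto
    then show "norm (h u * exp (- (norm u)\<^sup>2))
        \<le> norm (a * exp (- (norm u)\<^sup>2) + b * ((norm u)\<^sup>2 * exp (- (norm u)\<^sup>2)))"
      by (simp add: abs_mult algebra_simps)
  qed
qed measurable

lemma le_one_plus_sq: "(t::real) \<le> 1 + t\<^sup>2"
  using zero_le_power2[of "t - 1 / 2"] by (simp add: power2_eq_square algebra_simps)

lemma lborel_distr_uminus_euclidean: "distr lborel borel uminus = (lborel :: 'a::euclidean_space measure)"
  using lborel_affine[of "-1" "0::'a"] by (simp add: density_1)

lemma integral_gaussian_inner_eq_0:
  fixes v :: "'a::euclidean_space"
  shows "(\<integral>u. (v \<bullet> u) * exp (- (norm u)\<^sup>2) \<partial>lborel) = 0"
proof -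
  let ?h = "\<lambda>u::'a. (v \<bullet> u) * exp (- (norm u)\<^sup>2)"
  have "integral\<^sup>L lborel ?h = integral\<^sup>L (distr lborel borel uminus) ?h"
    by (simp add: lborel_distr_uminus_euclidean)
  also have "\<dots> = integral\<^sup>L lborel (\<lambda>u. ?h (- u))"
    by (rule integral_distr) auto
  also have "\<dots> = - integral\<^sup>L lborel ?h"
    by (simp flip: integral_minus)
  finally show ?thesis by simp
qed

lemma abs_diff_le_of_deriv_le_linear:
  fixes \<phi> \<phi>' :: "real \<Rightarrow> real"
  assumes deriv: "\<And>t. 0 \<le> t \<Longrightarrow> t \<le> 1 \<Longrightarrow> (\<phi> has_real_derivative \<phi>' t) (at t)"
    and bound: "\<And>t. 0 \<le> t \<Longrightarrow> t \<le> 1 \<Longrightarrow> \<bar>\<phi>' t\<bar> \<le> c * t"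
  shows "\<bar>\<phi> 1 - \<phi> 0\<bar> \<le> c / 2"
proof -
  have "\<phi> 1 - c / 2 * 1\<^sup>2 \<le> \<phi> 0 - c / 2 * 0\<^sup>2"
  proof (rule DERIV_nonpos_imp_nonincreasing[where f = "\<lambda>t. \<phi> t - c / 2 * t\<^sup>2"])
    fix t :: real assume "0 \<le> t" "t \<le> 1"
    with deriv[of t] bound[of t]
    show "\<exists>y. ((\<lambda>t. \<phi> t - c / 2 * t\<^sup>2) has_real_derivative y) (at t) \<and> y \<le> 0"
      by (intro exI[of _ "\<phi>' t - c * t"] conjI)
         (auto intro!: derivative_eq_intros simp: abs_le_iff mult.commute)
  qed simp
  moreover have "\<phi> 0 + c / 2 * 0\<^sup>2 \<le> \<phi> 1 + c / 2 * 1\<^sup>2"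
  proof (rule DERIV_nonneg_imp_nondecreasing[where f = "\<lambda>t. \<phi> t + c / 2 * t\<^sup>2"])
    fix t :: real assume "0 \<le> t" "t \<le> 1"
    with deriv[of t] bound[of t]
    show "\<exists>y. ((\<lambda>t. \<phi> t + c / 2 * t\<^sup>2) has_real_derivative y) (at t) \<and> y \<ge> 0"
      by (intro exI[of _ "\<phi>' t + c * t"] conjI)
         (auto intro!: derivative_eq_intros simp: abs_le_iff mult.commute)
  qed simp
  ultimately show ?thesis unfolding abs_le_iff by simp
qed

lemma lipschitz_gradient_taylor_bound:
  fixes f :: "'a::euclidean_space \<Rightarrow> real"
  assumes der: "\<And>x. (f has_derivative (\<lambda>h. g x \<bullet> h)) (at x)"
    and lip: "\<And>x y. norm (g x - g y) \<le> L * norm (x - y)"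
  shows "\<bar>f y - f x - g x \<bullet> (y - x)\<bar> \<le> L / 2 * (norm (y - x))\<^sup>2"
proof -
  define h where "h = y - x"
  let ?\<phi> = "\<lambda>t. f (x + t *\<^sub>R h) - t * (g x \<bullet> h)"
  have "\<bar>?\<phi> 1 - ?\<phi> 0\<bar> \<le> L * (norm h)\<^sup>2 / 2"
  proof (rule abs_diff_le_of_deriv_le_linear)
    fix t :: real
    have "((\<lambda>t. f (x + t *\<^sub>R h)) has_derivative (\<lambda>s. g (x + t *\<^sub>R h) \<bullet> (s *\<^sub>R h))) (at t)"
      by (rule has_derivative_compose[OF _ der]) (auto intro!: derivative_eq_intros)
    then have "((\<lambda>t. f (x + t *\<^sub>R h)) has_real_derivative g (x + t *\<^sub>R h) \<bullet> h) (at t)"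
      by (rule has_derivative_imp_has_field_derivative) simp
    then show "(?\<phi> has_real_derivative (g (x + t *\<^sub>R h) - g x) \<bullet> h) (at t)"
      by (auto intro!: derivative_eq_intros simp: inner_diff_left)
    assume "0 \<le> t"
    have "\<bar>(g (x + t *\<^sub>R h) - g x) \<bullet> h\<bar> \<le> norm (g (x + t *\<^sub>R h) - g x) * norm h"
      by (rule Cauchy_Schwarz_ineq2)
    also have "\<dots> \<le> L * norm (t *\<^sub>R h) * norm h"
      using lip[of "x + t *\<^sub>R h" x] by (intro mult_right_mono) auto
    finally show "\<bar>(g (x + t *\<^sub>R h) - g x) \<bullet> h\<bar> \<le> L * (norm h)\<^sup>2 * t"
      using \<open>0 \<le> t\<close> by (simp add: power2_eq_square mult_ac)
  qed
  then show ?thesis by (simp add: h_def algebra_simps)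
qed

lemma quadratic_growth_of_taylor_bound:
  fixes f :: "'a::real_inner \<Rightarrow> real"
  assumes "0 \<le> L" and quad: "\<And>y. \<bar>f y - f 0 - g \<bullet> y\<bar> \<le> L / 2 * (norm y)\<^sup>2"
  shows "\<bar>f y\<bar> \<le> (\<bar>f 0\<bar> + norm g + L / 2) * (1 + (norm y)\<^sup>2)"
proof -
  have "\<bar>g \<bullet> y\<bar> \<le> norm g * (1 + (norm y)\<^sup>2)"
    using Cauchy_Schwarz_ineq2[of g y] mult_left_mono[OF le_one_plus_sq[of "norm y"], of "norm g"]
    by simp
  moreover have "\<bar>f 0\<bar> \<le> \<bar>f 0\<bar> * (1 + (norm y)\<^sup>2)"
    using mult_left_mono[of 1 "1 + (norm y)\<^sup>2" "\<bar>f 0\<bar>"] by simp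
  moreover have "L / 2 * (norm y)\<^sup>2 \<le> L / 2 * (1 + (norm y)\<^sup>2)"
    using \<open>0 \<le> L\<close> by (simp add: mult_left_mono)
  ultimately show ?thesis
    using quad[of y] unfolding abs_le_iff distrib_right by linarith
qed

lemma norm_add_sq_le: "(norm (x + y))\<^sup>2 \<le> 2 * (norm x)\<^sup>2 + 2 * (norm y)\<^sup>2"
  for x y :: "'a::real_normed_vector"
proof -
  have "(norm (x + y))\<^sup>2 \<le> (norm x + norm y)\<^sup>2"
    by (intro power_mono norm_triangle_ineq) simp
  also have "\<dots> \<le> 2 * (norm x)\<^sup>2 + 2 * (norm y)\<^sup>2"
    using zero_le_power2[of "norm x - norm y"] by (simp add: power2_eq_square algebra_simps)
  finally show ?thesis .
qed

lemma continuous_on_gauss_smooth: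
  fixes f :: "'a::euclidean_space \<Rightarrow> real"
  assumes cont: "continuous_on UNIV f" and growth: "\<And>y. \<bar>f y\<bar> \<le> C * (1 + (norm y)\<^sup>2)"
  shows "continuous_on UNIV (gauss_smooth f \<sigma>)"
proof -
  have [measurable]: "f \<in> borel_measurable borel"
    using cont by (rule borel_measurable_continuous_onI)
  have "continuous_on UNIV (\<lambda>x. \<integral>u. f (x + \<sigma> *\<^sub>R u) * exp (- (norm u)\<^sup>2) \<partial>lborel)"
  proof (intro continuous_at_imp_continuous_on ballI continuous_at_sequentiallyI)
    fix a X assume X: "X \<longlonglongrightarrow> (a::'a)"
    obtain K where K: "\<And>n. norm (X n) \<le> K"
      using convergent_imp_Bseq[OF convergentI[OF X]] by (meson BseqE)
    have "0 \<le> C" using growth[of 0] by simp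
    define bound where "bound = (\<lambda>u::'a. C * (1 + 2 * K\<^sup>2) + 2 * C * \<sigma>\<^sup>2 * (norm u)\<^sup>2)"
    show "(\<lambda>n. \<integral>u. f (X n + \<sigma> *\<^sub>R u) * exp (- (norm u)\<^sup>2) \<partial>lborel)
        \<longlonglongrightarrow> (\<integral>u. f (a + \<sigma> *\<^sub>R u) * exp (- (norm u)\<^sup>2) \<partial>lborel)"
    proof (rule integral_dominated_convergence[where w = "\<lambda>u. bound u * exp (- (norm u)\<^sup>2)"])
      show "integrable lborel (\<lambda>u. bound u * exp (- (norm u)\<^sup>2))"
        using \<open>0 \<le> C\<close> by (intro integrable_gaussian_quadratic_bound) (auto simp: bound_def)
      show "AE u in lborel. (\<lambda>n. f (X n + \<sigma> *\<^sub>R u) * exp (- (norm u)\<^sup>2))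
          \<longlonglongrightarrow> f (a + \<sigma> *\<^sub>R u) * exp (- (norm u)\<^sup>2)"
        using X by (intro AE_I2 tendsto_intros continuous_on_tendsto_compose[OF cont]) auto
      show "AE u in lborel. norm (f (X n + \<sigma> *\<^sub>R u) * exp (- (norm u)\<^sup>2)) \<le> bound u * exp (- (norm u)\<^sup>2)"
        for n
      proof (rule AE_I2)
        fix u :: 'a
        have "(norm (X n))\<^sup>2 \<le> K\<^sup>2"
          using K[of n] by (intro power_mono) auto
        then have "(norm (X n + \<sigma> *\<^sub>R u))\<^sup>2 \<le> 2 * K\<^sup>2 + 2 * \<sigma>\<^sup>2 * (norm u)\<^sup>2"
          using norm_add_sq_le[of "X n" "\<sigma> *\<^sub>R u"] by (simp add: power_mult_distrib)
        then have "C * (1 + (norm (X n + \<sigma> *\<^sub>R u))\<^sup>2) \<le> C * (1 + (2 * K\<^sup>2 + 2 * \<sigma>\<^sup>2 * (norm u)\<^sup>2))"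
          using \<open>0 \<le> C\<close> by (intro mult_left_mono) auto
        also have "\<dots> = bound u"
          by (simp add: bound_def algebra_simps)
        finally have "\<bar>f (X n + \<sigma> *\<^sub>R u)\<bar> \<le> bound u"
          using growth[of "X n + \<sigma> *\<^sub>R u"] by linarith
        then show "norm (f (X n + \<sigma> *\<^sub>R u) * exp (- (norm u)\<^sup>2)) \<le> bound u * exp (- (norm u)\<^sup>2)"
          by (simp add: abs_mult)
      qed
    qed measurable
  qed
  then show ?thesis
    unfolding gauss_smooth_def by (intro continuous_intros)
qed

lemma gauss_smooth_approx:
  fixes f :: "'a::euclidean_space \<Rightarrow> real"
  assumes cont: "continuous_on UNIV f"
    and quad: "\<And>y. \<bar>f y - f x - g \<bullet> (y - x)\<bar> \<le> L / 2 * (norm (y - x))\<^sup>2"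
  shows "\<bar>gauss_smooth f \<sigma> x - f x\<bar> \<le> L * \<sigma>\<^sup>2 * real DIM('a) / 4"
proof -
  have [measurable]: "f \<in> borel_measurable borel"
    using cont by (rule borel_measurable_continuous_onI)
  define w where "w = (\<lambda>u::'a. exp (- (norm u)\<^sup>2))"
  define Z where "Z = sqrt pi ^ DIM('a)"
  define r where "r = (\<lambda>u. f (x + \<sigma> *\<^sub>R u) - f x - \<sigma> * (g \<bullet> u))"
  have r_bound: "\<bar>r u\<bar> \<le> L * \<sigma>\<^sup>2 / 2 * (norm u)\<^sup>2" for u
    using quad[of "x + \<sigma> *\<^sub>R u"] by (simp add: r_def power_mult_distrib)
  have int_r: "integrable lborel (\<lambda>u. r u * w u)"
    unfolding w_def using r_bound
    by (intro integrable_gaussian_quadratic_bound[where a = 0 and b = "L * \<sigma>\<^sup>2 / 2"])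
       (auto simp: r_def)
  have int_inner: "integrable lborel (\<lambda>u. (g \<bullet> u) * w u)"
    unfolding w_def
  proof (rule integrable_gaussian_quadratic_bound)
    show "\<bar>g \<bullet> u\<bar> \<le> norm g + norm g * (norm u)\<^sup>2" for u
      using Cauchy_Schwarz_ineq2[of g u] mult_left_mono[OF le_one_plus_sq[of "norm u"], of "norm g"]
      by (simp add: algebra_simps)
  qed simp
  have int_w: "has_bochner_integral lborel w Z"
    unfolding w_def Z_def by (rule has_bochner_integral_gaussian_euclidean)
  have "f (x + \<sigma> *\<^sub>R u) * w u = f x * w u + \<sigma> * ((g \<bullet> u) * w u) + r u * w u" for u
    by (simp add: r_def algebra_simps)
  then have "(\<integral>u. f (x + \<sigma> *\<^sub>R u) * w u \<partial>lborel) = f x * Z + (\<integral>u. r u * w u \<partial>lborel)"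
    using int_w int_inner int_r integral_gaussian_inner_eq_0[of g]
    by (simp add: has_bochner_integral_iff w_def)
  moreover have "pi powr (- real DIM('a) / 2) * Z = 1"
    by (simp add: Z_def powr_half_sqrt_powr powr_realpow real_sqrt_power powr_minus field_simps)
  ultimately have eq: "gauss_smooth f \<sigma> x - f x = pi powr (- real DIM('a) / 2) * (\<integral>u. r u * w u \<partial>lborel)"
    by (simp add: gauss_smooth_def w_def algebra_simps)
  have "\<bar>\<integral>u. r u * w u \<partial>lborel\<bar> \<le> (\<integral>u. L * \<sigma>\<^sup>2 / 2 * ((norm u)\<^sup>2 * w u) \<partial>lborel)"
  proof (rule integral_abs_bound_integral[OF int_r])
    show "integrable lborel (\<lambda>u. L * \<sigma>\<^sup>2 / 2 * ((norm u)\<^sup>2 * w u))"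
      using has_bochner_integral_norm_sq_gaussian_euclidean
      by (intro Bochner_Integration.integrable_mult_right) (auto simp: w_def has_bochner_integral_iff)
    show "\<bar>r u * w u\<bar> \<le> L * \<sigma>\<^sup>2 / 2 * ((norm u)\<^sup>2 * w u)" for u
      using mult_right_mono[OF r_bound[of u], of "w u"] by (simp add: w_def abs_mult)
  qed
  also have "\<dots> = L * \<sigma>\<^sup>2 / 2 * (real DIM('a) * Z / 2)"
    using has_bochner_integral_norm_sq_gaussian_euclidean[where 'a='a]
    by (simp add: has_bochner_integral_iff w_def Z_def)
  finally have "\<bar>gauss_smooth f \<sigma> x - f x\<bar>
      \<le> pi powr (- real DIM('a) / 2) * Z * (L * \<sigma>\<^sup>2 * real DIM('a) / 4)"
    unfolding eq abs_mult by (simp add: mult_left_mono algebra_simps)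
  with \<open>pi powr (- real DIM('a) / 2) * Z = 1\<close> show ?thesis by simp
qed

text \<open>The argument uses \<open>Inf (range f)\<close> only as the reference level of \<open>sublevel_opt\<close>, never
  as a true infimum; hence no boundedness from below is needed.\<close>

lemma uniform_approximation_attains_min:
  fixes F f :: "'a::heine_borel \<Rightarrow> real"
  assumes cont: "continuous_on UNIV F" and approx: "\<And>x. \<bar>F x - f x\<bar> \<le> \<delta>"
    and gap: "2 * \<delta> < \<epsilon>" and bounded: "bounded (sublevel_opt f \<epsilon>)"
  shows "\<exists>x. \<forall>y. F x \<le> F y"
proof -
  define m where "m = (INF y. f y)"
  define S where "S = sublevel_opt f \<epsilon>"
  have "0 \<le> \<delta>"
    using approx[of undefined] by linarith
  have "\<exists>v\<in>range f. v < m + (\<epsilon> - 2 * \<delta>)"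
    using gap unfolding m_def by (intro cInf_lessD) auto
  then obtain x0 where x0: "f x0 < m + (\<epsilon> - 2 * \<delta>)"
    by blast
  with \<open>0 \<le> \<delta>\<close> have "x0 \<in> S"
    unfolding S_def sublevel_opt_def m_def by simp
  then have "closure S \<noteq> {}"
    using closure_subset by blast
  moreover have "compact (closure S)"
    using bounded unfolding S_def by (rule compact_closure[THEN iffD2])
  ultimately obtain xs where xs_min: "\<And>y. y \<in> closure S \<Longrightarrow> F xs \<le> F y"
    using continuous_attains_inf continuous_on_subset[OF cont subset_UNIV] by metis
  have "F xs \<le> F y" for y
  proof (cases "y \<in> closure S")
    case False
    then have "y \<notin> S"
      using closure_subset by blast
    then have "\<epsilon> < f y - m"
      unfolding S_def sublevel_opt_def m_def by simp
    with x0 approx[of x0] approx[of y] have "F x0 \<le> F y"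
      unfolding abs_le_iff by linarith
    moreover have "F xs \<le> F x0"
      using xs_min closure_subset \<open>x0 \<in> S\<close> by blast
    ultimately show ?thesis by linarith
  qed (rule xs_min)
  then show ?thesis by blast
qed

theorem proposition3p7:
  fixes f :: "'a::euclidean_space \<Rightarrow> real" and L \<epsilon> \<sigma> :: real
  assumes "L > 0" and "L_smooth L f" and "bdd_below (range f)"
    and "\<epsilon> > 0" and "bounded (sublevel_opt f \<epsilon>)"
    and "0 < \<sigma>" and "\<sigma> < sqrt (4 * \<epsilon> / (3 * L * real DIM('a)))"
  shows "\<exists>x. \<forall>y. gauss_smooth f \<sigma> x \<le> gauss_smooth f \<sigma> y"
proof -
  obtain g where der: "\<And>x. (f has_derivative (\<lambda>h. g x \<bullet> h)) (at x)"
    and lip: "\<And>x y. norm (g x - g y) \<le> L * norm (x - y)"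
    using assms(2) unfolding L_smooth_def by blast
  have quad: "\<bar>f y - f x - g x \<bullet> (y - x)\<bar> \<le> L / 2 * (norm (y - x))\<^sup>2" for x y
    using der lip by (rule lipschitz_gradient_taylor_bound)
  have cont: "continuous_on UNIV f"
    using der by (intro continuous_at_imp_continuous_on ballI has_derivative_continuous)
  have "continuous_on UNIV (gauss_smooth f \<sigma>)"
    using quadratic_growth_of_taylor_bound[of L f "g 0"] quad[of _ 0] \<open>L > 0\<close>
    by (intro continuous_on_gauss_smooth[OF cont]) auto
  moreover have "\<bar>gauss_smooth f \<sigma> x - f x\<bar> \<le> L * \<sigma>\<^sup>2 * real DIM('a) / 4" for x
    using cont quad by (rule gauss_smooth_approx)
  moreover have "2 * (L * \<sigma>\<^sup>2 * real DIM('a) / 4) < \<epsilon>"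
  proof -
    have "\<sigma>\<^sup>2 < (sqrt (4 * \<epsilon> / (3 * L * real DIM('a))))\<^sup>2"
      using assms(6,7) by (intro power_strict_mono) auto
    then have "\<sigma>\<^sup>2 < 4 * \<epsilon> / (3 * L * real DIM('a))"
      using assms(1,4) by simp
    then show ?thesis
      using assms(1,4) by (simp add: field_simps)
  qed
  ultimately show ?thesis
    using assms(5) by (rule uniform_approximation_attains_min)
qed

end
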